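(* If $G$ is a graph with no induced subgraph isomorphic to $2K_2$, then $\operatorname{reg}(G)\le\frac{1}{2}\Gamma(G)+2$.
   Context: $2K_2$ is the disjoint union of two edges. The maximum privacy degree is $\Gamma(G)=\max\{|N_G[x]\setminus N_G[y]|: x,y\in V(G),\ xy\in E(G)\}$ (taken over both orderings of each edge; $0$ if $G$ has no edges), where $N_G[x]=N_G(x)\cup\{x\}$. $\operatorname{reg}(G)=\max\{j\ge0:\widetilde H_{j-1}(\operatorname{Ind}(G[S]);\Bbbk)\neq0\text{ for some }S\subseteq V(G)\}$ over a field $\Bbbk$, $\operatorname{Ind}$ the independence complex. *)

theory Defs
  imports Complex_Main
begin

definition simple_graph :: "'a set \<Rightarrow> ('a \<Rightarrow> 'a \<Rightarrow> bool) \<Rightarrow> bool" where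
  "simple_graph V E \<longleftrightarrow> finite V \<and> (\<forall>x y. E x y \<longrightarrow> x \<in> V \<and> y \<in> V \<and> x \<noteq> y \<and> E y x)"

definition twoK2_free :: "'a set \<Rightarrow> ('a \<Rightarrow> 'a \<Rightarrow> bool) \<Rightarrow> bool" where
  "twoK2_free V E \<longleftrightarrow> \<not> (\<exists>a\<in>V. \<exists>b\<in>V. \<exists>c\<in>V. \<exists>d\<in>V.
      distinct [a, b, c, d] \<and> E a b \<and> E c d \<and>
      \<not> E a c \<and> \<not> E a d \<and> \<not> E b c \<and> \<not> E b d)"

definition closed_nbhd :: "'a set \<Rightarrow> ('a \<Rightarrow> 'a \<Rightarrow> bool) \<Rightarrow> 'a \<Rightarrow> 'a set" where
  "closed_nbhd V E x = {y \<in> V. E x y} \<union> {x}"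

definition max_privacy_degree :: "'a set \<Rightarrow> ('a \<Rightarrow> 'a \<Rightarrow> bool) \<Rightarrow> nat" where
  "max_privacy_degree V E =
     Max ({0} \<union> {card (closed_nbhd V E x - closed_nbhd V E y) | x y. x \<in> V \<and> y \<in> V \<and> E x y})"

definition ind_complex :: "('a \<Rightarrow> 'a \<Rightarrow> bool) \<Rightarrow> 'a set \<Rightarrow> 'a set set" where
  "ind_complex E S = {\<sigma>. \<sigma> \<subseteq> S \<and> (\<forall>x\<in>\<sigma>. \<forall>y\<in>\<sigma>. \<not> E x y)}"

text \<open>Simplicial chains: a chain of faces of cardinality j (dimension j-1) with coefficients in 'k.\<close>
definition is_chain :: "'a set set \<Rightarrow> nat \<Rightarrow> ('a set \<Rightarrow> 'k::zero) \<Rightarrow> bool" where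
  "is_chain \<Delta> j c \<longleftrightarrow> (\<forall>\<sigma>. c \<sigma> \<noteq> 0 \<longrightarrow> \<sigma> \<in> \<Delta> \<and> card \<sigma> = j)"

text \<open>Simplicial boundary, with the orientation induced by the linear order of vertices:
  removing v from \<tau> = insert v \<sigma> has sign (-1)^(number of elements of \<tau> below v).
  The boundary of a vertex is the empty face (augmented / reduced complex).\<close>
definition boundary :: "'a::linorder set set \<Rightarrow> ('a set \<Rightarrow> 'k::field) \<Rightarrow> 'a set \<Rightarrow> 'k" where
  "boundary \<Delta> c \<sigma> =
     (\<Sum>v \<in> {v. v \<notin> \<sigma> \<and> insert v \<sigma> \<in> \<Delta>}. (-1) ^ card {u \<in> \<sigma>. u < v} * c (insert v \<sigma>))"

text \<open>Reduced homology group H~_{j-1}(\<Delta>; k) is nonzero: there is a (j-1)-cycle that is not a boundary.\<close>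
definition red_hom_nonzero :: "'k::field itself \<Rightarrow> 'a::linorder set set \<Rightarrow> nat \<Rightarrow> bool" where
  "red_hom_nonzero K \<Delta> j \<longleftrightarrow>
     (\<exists>z :: 'a set \<Rightarrow> 'k. is_chain \<Delta> j z \<and>
        (\<forall>\<sigma>. card \<sigma> + 1 = j \<longrightarrow> boundary \<Delta> z \<sigma> = 0) \<and>
        \<not> (\<exists>c :: 'a set \<Rightarrow> 'k. is_chain \<Delta> (j + 1) c \<and>
              (\<forall>\<sigma>. card \<sigma> = j \<longrightarrow> z \<sigma> = boundary \<Delta> c \<sigma>)))"

text \<open>Castelnuovo--Mumford regularity of the edge ideal via Hochster's formula, over the field 'k.\<close>
definition reg :: "'k::field itself \<Rightarrow> 'a::linorder set \<Rightarrow> ('a \<Rightarrow> 'a \<Rightarrow> bool) \<Rightarrow> nat" where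
  "reg K V E = Sup {j. \<exists>S \<subseteq> V. red_hom_nonzero K (ind_complex E S) j}"

end

theory Submission
  imports Defs
begin

text \<open>
  Say that \<open>Ind(G[S])\<close> is acyclic in degree \<open>j\<close> if every cycle of \<open>j\<close>-element faces
  bounds; as \<open>reg\<close> is read off from the reduced homology of these complexes, it suffices to
  show acyclicity of every \<open>Ind(G[S])\<close> in all degrees \<open>j\<close> with \<open>\<Gamma>(G) + 5 \<le> 2j\<close>. An isolated vertex makes the complex a cone, hence acyclic, and
  an explicit coning construction gives the deletion--link step: if \<open>S - x\<close> is acyclic in
  degree \<open>j\<close> and \<open>S - N[x]\<close> in degree \<open>j - 1\<close>, then \<open>S\<close> is acyclic in degree \<open>j\<close>.

  Delete an endpoint \<open>x\<close> of an edge \<open>xy\<close>. Since \<open>G\<close> is \<open>2K\<^sub>2\<close>-free, every edge of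
  \<open>S - N[x]\<close> meets \<open>A = N(y) - N[x]\<close>, and \<open>|A| \<le> \<Gamma>(G)\<close>. A second induction shows that
  a vertex set with a vertex cover \<open>A\<close> is acyclic in degree \<open>j\<close> once \<open>|A| + 3 \<le> 2j\<close>:
  delete a vertex \<open>a \<in> A\<close>; if \<open>a\<close> has a neighbour in \<open>A\<close>, its link loses two vertices of
  \<open>A\<close>, and if \<open>A\<close> is independent, \<open>2K\<^sub>2\<close>-freeness makes the neighbourhoods of \<open>A\<close>
  nested, so the link of a vertex with the largest neighbourhood is edgeless.
\<close>

section \<open>Chains on independence complexes\<close>

lemma ind_complex_subset: "\<sigma> \<in> ind_complex E S \<Longrightarrow> \<sigma> \<subseteq> S"
  by (simp add: ind_complex_def)

lemma finite_ind_complex_face: "finite S \<Longrightarrow> \<sigma> \<in> ind_complex E S \<Longrightarrow> finite \<sigma>"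
  by (meson finite_subset ind_complex_subset)

lemma ind_complex_downward_closed: "\<sigma> \<in> ind_complex E S \<Longrightarrow> \<tau> \<subseteq> \<sigma> \<Longrightarrow> \<tau> \<in> ind_complex E S"
  by (auto simp add: ind_complex_def)

lemma ind_complex_mono: "T \<subseteq> S \<Longrightarrow> ind_complex E T \<subseteq> ind_complex E S"
  by (auto simp add: ind_complex_def)

lemma insert_ind_complex:
  "\<sigma> \<in> ind_complex E S \<Longrightarrow> x \<in> S \<Longrightarrow> \<not> E x x \<Longrightarrow> \<forall>v\<in>\<sigma>. \<not> E x v \<and> \<not> E v x
   \<Longrightarrow> insert x \<sigma> \<in> ind_complex E S"
  by (auto simp: ind_complex_def)

lemma finite_coface_vertices: "finite S \<Longrightarrow> finite {v. v \<notin> \<sigma> \<and> insert v \<sigma> \<in> ind_complex E S}"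
  by (rule finite_subset[of _ S]) (auto dest: ind_complex_subset)

lemma is_chain_ind_complex_mono:
  "is_chain (ind_complex E T) j c \<Longrightarrow> T \<subseteq> S \<Longrightarrow> is_chain (ind_complex E S) j c"
  using ind_complex_mono unfolding is_chain_def by blast

lemma boundary_add: "boundary D (\<lambda>\<sigma>. a \<sigma> + b \<sigma>) \<sigma> = boundary D a \<sigma> + boundary D b \<sigma>"
  by (simp add: boundary_def distrib_left sum.distrib)

lemma boundary_diff: "boundary D (\<lambda>\<sigma>. a \<sigma> - b \<sigma>) \<sigma> = boundary D a \<sigma> - boundary D b \<sigma>"
  by (simp add: boundary_def right_diff_distrib sum_subtractf)

lemma boundary_zero: "boundary D (\<lambda>\<sigma>. 0) \<sigma> = 0"
  by (simp add: boundary_def)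

lemma is_chain_boundary:
  assumes "finite S" "is_chain (ind_complex E S) (Suc j) c"
  shows "is_chain (ind_complex E S) j (boundary (ind_complex E S) c)"
  unfolding is_chain_def
proof (intro allI impI)
  fix \<sigma> assume "boundary (ind_complex E S) c \<sigma> \<noteq> 0"
  then obtain v where v: "v \<notin> \<sigma>" "insert v \<sigma> \<in> ind_complex E S" "c (insert v \<sigma>) \<noteq> 0"
    unfolding boundary_def by (metis (no_types, lifting) mem_Collect_eq mult_zero_right sum.neutral)
  then have "card (insert v \<sigma>) = Suc j" using assms(2) by (auto simp: is_chain_def)
  moreover have "finite \<sigma>" using finite_ind_complex_face[OF assms(1) v(2)] by simp
  ultimately show "\<sigma> \<in> ind_complex E S \<and> card \<sigma> = j"
    using v ind_complex_downward_closed by fastforce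
qed

lemma boundary_chain_0:
  assumes "finite S" "is_chain (ind_complex E S) 0 c"
  shows "boundary (ind_complex E S) c \<sigma> = 0"
  unfolding boundary_def
proof (rule sum.neutral, intro ballI)
  fix v assume "v \<in> {v. v \<notin> \<sigma> \<and> insert v \<sigma> \<in> ind_complex E S}"
  then have "insert v \<sigma> \<in> ind_complex E S" by simp
  moreover have "finite (insert v \<sigma>)" by (rule finite_ind_complex_face[OF assms(1) calculation])
  ultimately have "c (insert v \<sigma>) = 0" using assms(2) by (auto simp: is_chain_def)
  then show "(- 1) ^ card {u \<in> \<sigma>. u < v} * c (insert v \<sigma>) = 0" by simp
qed

lemma boundary_ind_complex_restrict:
  assumes "finite S" "T \<subseteq> S" "is_chain (ind_complex E T) j c"
  shows "boundary (ind_complex E S) c = boundary (ind_complex E T) c"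
proof
  fix \<sigma>
  show "boundary (ind_complex E S) c \<sigma> = boundary (ind_complex E T) c \<sigma>"
    unfolding boundary_def
  proof (rule sum.mono_neutral_cong_right)
    show "finite {v. v \<notin> \<sigma> \<and> insert v \<sigma> \<in> ind_complex E S}"
      using finite_coface_vertices[OF assms(1)] .
    show "{v. v \<notin> \<sigma> \<and> insert v \<sigma> \<in> ind_complex E T} \<subseteq> {v. v \<notin> \<sigma> \<and> insert v \<sigma> \<in> ind_complex E S}"
      using ind_complex_mono[OF assms(2)] by auto
  qed (use assms(3) in \<open>auto simp: is_chain_def\<close>)
qed

section \<open>Coning and the deletion--link step\<close>

definition ins_sign :: "'a::linorder \<Rightarrow> 'a set \<Rightarrow> 'k::field" where
  "ins_sign x \<rho> = (-1) ^ card {u \<in> \<rho>. u < x}"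

definition cone :: "'a::linorder \<Rightarrow> ('a set \<Rightarrow> 'k::field) \<Rightarrow> 'a set \<Rightarrow> 'k" where
  "cone x c \<tau> = (if x \<in> \<tau> then ins_sign x (\<tau> - {x}) * c (\<tau> - {x}) else 0)"

lemma ins_sign_square: "ins_sign x \<rho> * ins_sign x \<rho> = (1::'k::field)"
  by (simp add: ins_sign_def power_mult_distrib[symmetric])

lemma ins_sign_nonzero: "ins_sign x \<rho> \<noteq> (0::'k::field)"
  by (simp add: ins_sign_def)

lemma boundary_ins_sign:
  "boundary D c \<sigma> = (\<Sum>v \<in> {v. v \<notin> \<sigma> \<and> insert v \<sigma> \<in> D}. ins_sign v \<sigma> * c (insert v \<sigma>))"
  by (simp add: boundary_def ins_sign_def)

lemma ins_sign_swap:
  assumes "finite \<rho>" "x \<notin> \<rho>" "v \<notin> \<rho>" "v \<noteq> x"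
  shows "ins_sign v (insert x \<rho>) * ins_sign x (insert v \<rho>) = - (ins_sign x \<rho> * ins_sign v \<rho> :: 'k::field)"
proof (cases "x < v")
  case True
  have 1: "{u \<in> insert x \<rho>. u < v} = insert x {u \<in> \<rho>. u < v}" using True by auto
  have 2: "{u \<in> insert v \<rho>. u < x} = {u \<in> \<rho>. u < x}" using True by auto
  show ?thesis unfolding ins_sign_def 1 2 using assms by simp
next
  case False
  then have "v < x" using assms(4) by auto
  then have 1: "{u \<in> insert x \<rho>. u < v} = {u \<in> \<rho>. u < v}"
    and 2: "{u \<in> insert v \<rho>. u < x} = insert v {u \<in> \<rho>. u < x}" by auto
  show ?thesis unfolding ins_sign_def 1 2 using assms by simp
qed

lemma boundary_cone_off_apex:
  fixes c :: "'a::linorder set \<Rightarrow> 'k::field"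
  assumes S: "finite S" and x: "x \<notin> \<sigma>"
    and supp: "\<And>\<tau>. c \<tau> \<noteq> 0 \<Longrightarrow> x \<notin> \<tau> \<and> insert x \<tau> \<in> ind_complex E S"
  shows "boundary (ind_complex E S) (cone x c) \<sigma> = c \<sigma>"
proof -
  let ?D = "ind_complex E S"
  have "boundary ?D (cone x c) \<sigma> = (\<Sum>v \<in> {v. v \<notin> \<sigma> \<and> insert v \<sigma> \<in> ?D}. if v = x then c \<sigma> else 0)"
    unfolding boundary_ins_sign
  proof (rule sum.cong)
    fix v assume "v \<in> {v. v \<notin> \<sigma> \<and> insert v \<sigma> \<in> ?D}"
    show "ins_sign v \<sigma> * cone x c (insert v \<sigma>) = (if v = x then c \<sigma> else 0)"
    proof (cases "v = x")
      case True
      then have "insert v \<sigma> - {x} = \<sigma>" using x by auto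
      then show ?thesis using True by (simp add: cone_def mult.assoc[symmetric] ins_sign_square)
    qed (use x in \<open>simp add: cone_def\<close>)
  qed simp
  also have "\<dots> = c \<sigma>"
    using supp[of \<sigma>] x finite_coface_vertices[OF S, of \<sigma> E] by (auto simp: sum.delta)
  finally show ?thesis .
qed

lemma boundary_cone_at_apex:
  fixes c :: "'a::linorder set \<Rightarrow> 'k::field"
  assumes S: "finite S" and x: "x \<notin> \<rho>"
    and supp: "\<And>\<tau>. c \<tau> \<noteq> 0 \<Longrightarrow> x \<notin> \<tau> \<and> insert x \<tau> \<in> ind_complex E S"
  shows "boundary (ind_complex E S) (cone x c) (insert x \<rho>) = - (ins_sign x \<rho> * boundary (ind_complex E S) c \<rho>)"
proof -
  let ?D = "ind_complex E S"
  let ?I = "{v. v \<notin> insert x \<rho> \<and> insert v (insert x \<rho>) \<in> ?D}"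
  let ?J = "{v. v \<notin> \<rho> \<and> insert v \<rho> \<in> ?D}"
  let ?f = "\<lambda>v. - (ins_sign x \<rho> * (ins_sign v \<rho> * c (insert v \<rho>)))"
  have "boundary ?D (cone x c) (insert x \<rho>) = (\<Sum>v \<in> ?I. ?f v)"
    unfolding boundary_ins_sign
  proof (rule sum.cong)
    fix v assume v: "v \<in> ?I"
    then have e: "insert v (insert x \<rho>) - {x} = insert v \<rho>" using x by auto
    have "finite \<rho>" using finite_ind_complex_face[OF S, of "insert v (insert x \<rho>)" E] v by simp
    then have sw: "ins_sign v (insert x \<rho>) * ins_sign x (insert v \<rho>) = - (ins_sign x \<rho> * ins_sign v \<rho> :: 'k)"
      by (rule ins_sign_swap) (use v x in auto)
    have "ins_sign v (insert x \<rho>) * cone x c (insert v (insert x \<rho>))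
        = (ins_sign v (insert x \<rho>) * ins_sign x (insert v \<rho>)) * c (insert v \<rho>)"
      by (simp add: cone_def e mult.assoc)
    also have "\<dots> = ?f v" unfolding sw by simp
    finally show "ins_sign v (insert x \<rho>) * cone x c (insert v (insert x \<rho>)) = ?f v" .
  qed simp
  also have "\<dots> = (\<Sum>v \<in> ?J. ?f v)"
  proof (rule sum.mono_neutral_left)
    show "finite ?J" using finite_coface_vertices[OF S] .
    show "?I \<subseteq> ?J"
    proof
      fix v assume "v \<in> ?I"
      moreover have "insert v \<rho> \<subseteq> insert v (insert x \<rho>)" by blast
      ultimately show "v \<in> ?J" using ind_complex_downward_closed by blast
    qed
    show "\<forall>v\<in>?J - ?I. ?f v = 0"
    proof
      fix v assume "v \<in> ?J - ?I"
      moreover have "insert x (insert v \<rho>) = insert v (insert x \<rho>)" by blast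
      ultimately have "c (insert v \<rho>) = 0" using supp[of "insert v \<rho>"] by auto
      then show "?f v = 0" by simp
    qed
  qed
  also have "\<dots> = - (ins_sign x \<rho> * boundary ?D c \<rho>)"
    unfolding boundary_ins_sign by (simp only: sum_distrib_left sum_negf)
  finally show ?thesis .
qed

lemma boundary_cone:
  fixes c :: "'a::linorder set \<Rightarrow> 'k::field"
  assumes S: "finite S"
    and supp: "\<And>\<tau>. c \<tau> \<noteq> 0 \<Longrightarrow> x \<notin> \<tau> \<and> insert x \<tau> \<in> ind_complex E S"
  shows "boundary (ind_complex E S) (cone x c) \<sigma> + cone x (boundary (ind_complex E S) c) \<sigma> = c \<sigma>"
proof (cases "x \<in> \<sigma>")
  case True
  define \<rho> where "\<rho> = \<sigma> - {x}"
  have \<sigma>: "\<sigma> = insert x \<rho>" "x \<notin> \<rho>" using True by (auto simp: \<rho>_def)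
  have "c \<sigma> = 0" using supp[of \<sigma>] True by blast
  moreover have "boundary (ind_complex E S) (cone x c) \<sigma> = - (ins_sign x \<rho> * boundary (ind_complex E S) c \<rho>)"
    unfolding \<sigma>(1) by (rule boundary_cone_at_apex[OF S \<sigma>(2)]) (fact supp)
  ultimately show ?thesis using \<sigma> by (simp add: cone_def)
qed (simp add: boundary_cone_off_apex[OF S _ supp] cone_def)

lemma is_chain_cone:
  assumes S: "finite S"
    and supp: "\<And>\<sigma>. c \<sigma> \<noteq> 0 \<Longrightarrow> card \<sigma> = j \<and> x \<notin> \<sigma> \<and> insert x \<sigma> \<in> ind_complex E S"
  shows "is_chain (ind_complex E S) (Suc j) (cone x c)"
  unfolding is_chain_def
proof (intro allI impI)
  fix \<tau> assume "cone x c \<tau> \<noteq> 0"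
  then have t: "x \<in> \<tau>" "c (\<tau> - {x}) \<noteq> 0" by (auto simp: cone_def split: if_splits)
  then have "insert x (\<tau> - {x}) = \<tau>" by auto
  with supp[OF t(2)] have "\<tau> \<in> ind_complex E S" "card (\<tau> - {x}) = j" by auto
  moreover have "finite \<tau>" using finite_ind_complex_face[OF S calculation(1)] .
  ultimately show "\<tau> \<in> ind_complex E S \<and> card \<tau> = Suc j"
    using card_Suc_Diff1[OF _ t(1)] by auto
qed

definition ind_acyclic :: "'k::field itself \<Rightarrow> ('a::linorder \<Rightarrow> 'a \<Rightarrow> bool) \<Rightarrow> 'a set \<Rightarrow> nat \<Rightarrow> bool" where
  "ind_acyclic K E S j \<longleftrightarrow>
     (\<forall>z :: 'a set \<Rightarrow> 'k. is_chain (ind_complex E S) j z \<and> (\<forall>\<sigma>. boundary (ind_complex E S) z \<sigma> = 0)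
        \<longrightarrow> (\<exists>c. is_chain (ind_complex E S) (Suc j) c \<and> (\<forall>\<sigma>. boundary (ind_complex E S) c \<sigma> = z \<sigma>)))"

lemma ind_acyclicI:
  fixes K :: "'k::field itself"
  assumes "\<And>z :: 'a::linorder set \<Rightarrow> 'k. is_chain (ind_complex E S) j z \<Longrightarrow>
      (\<And>\<sigma>. boundary (ind_complex E S) z \<sigma> = 0) \<Longrightarrow>
      \<exists>c. is_chain (ind_complex E S) (Suc j) c \<and> (\<forall>\<sigma>. boundary (ind_complex E S) c \<sigma> = z \<sigma>)"
  shows "ind_acyclic K E S j"
  using assms unfolding ind_acyclic_def by blast

lemma ind_acyclicD:
  fixes K :: "'k::field itself" and z :: "'a::linorder set \<Rightarrow> 'k"
  assumes "ind_acyclic K E S j" "is_chain (ind_complex E S) j z"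
    "\<And>\<sigma>. boundary (ind_complex E S) z \<sigma> = 0"
  obtains c where "is_chain (ind_complex E S) (Suc j) c" "\<And>\<sigma>. boundary (ind_complex E S) c \<sigma> = z \<sigma>"
  using assms unfolding ind_acyclic_def by blast

definition deletion_part :: "'a \<Rightarrow> ('a set \<Rightarrow> 'k::zero) \<Rightarrow> 'a set \<Rightarrow> 'k" where
  "deletion_part x z \<sigma> = (if x \<in> \<sigma> then 0 else z \<sigma>)"

definition link_part :: "'a::linorder \<Rightarrow> ('a set \<Rightarrow> 'k::field) \<Rightarrow> 'a set \<Rightarrow> 'k" where
  "link_part x z \<rho> = (if x \<in> \<rho> then 0 else ins_sign x \<rho> * z (insert x \<rho>))"

lemma deletion_part_plus_cone_link_part:
  "deletion_part x z \<sigma> + cone x (link_part x z) \<sigma> = z \<sigma>"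
proof (cases "x \<in> \<sigma>")
  case True
  then have "insert x (\<sigma> - {x}) = \<sigma>" by auto
  then show ?thesis
    using True by (simp add: deletion_part_def cone_def link_part_def mult.assoc[symmetric] ins_sign_square)
qed (simp add: deletion_part_def cone_def)

lemma deletion_part_support:
  "is_chain (ind_complex E S) j z \<Longrightarrow> deletion_part x z \<sigma> \<noteq> 0
   \<Longrightarrow> x \<notin> \<sigma> \<and> \<sigma> \<in> ind_complex E S \<and> card \<sigma> = j"
  by (auto simp: deletion_part_def is_chain_def split: if_splits)

lemma link_part_support:
  assumes "finite S" "is_chain (ind_complex E S) j z" "link_part x z \<rho> \<noteq> 0"
  shows "x \<notin> \<rho> \<and> insert x \<rho> \<in> ind_complex E S \<and> Suc (card \<rho>) = j"
proof -
  have "x \<notin> \<rho>" "z (insert x \<rho>) \<noteq> 0" using assms(3) by (auto simp: link_part_def split: if_splits)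
  moreover from this have "insert x \<rho> \<in> ind_complex E S" "card (insert x \<rho>) = j"
    using assms(2) by (auto simp: is_chain_def)
  moreover have "finite \<rho>" using finite_ind_complex_face[OF assms(1) calculation(3)] by simp
  ultimately show ?thesis by simp
qed

text \<open>\<open>link_part x\<close> is the connecting map of the deletion--link exact sequence.\<close>

lemma boundary_link_deletion_part:
  fixes z :: "'a::linorder set \<Rightarrow> 'k::field"
  assumes S: "finite S" and z: "is_chain (ind_complex E S) j z"
    and cycle: "\<And>\<sigma>. boundary (ind_complex E S) z \<sigma> = 0"
  shows "boundary (ind_complex E S) (link_part x z) \<rho> = 0"
    and "boundary (ind_complex E S) (deletion_part x z) \<rho> = - link_part x z \<rho>"
proof -
  let ?D = "ind_complex E S"
  let ?w = "link_part x z"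
  have homotopy: "\<And>\<sigma>. boundary ?D (cone x ?w) \<sigma> + cone x (boundary ?D ?w) \<sigma> = ?w \<sigma>"
    by (rule boundary_cone[OF S]) (use link_part_support[OF S z] in blast)
  have split: "\<And>\<sigma>. boundary ?D (deletion_part x z) \<sigma> + boundary ?D (cone x ?w) \<sigma> = 0"
    using cycle boundary_add[of ?D "deletion_part x z" "cone x ?w"]
    by (simp add: deletion_part_plus_cone_link_part)
  have del_apex: "\<And>\<sigma>. x \<in> \<sigma> \<Longrightarrow> boundary ?D (deletion_part x z) \<sigma> = 0"
    unfolding boundary_ins_sign by (rule sum.neutral) (simp add: deletion_part_def)
  show link: "boundary ?D ?w \<rho>' = 0" for \<rho>'
  proof (cases "x \<in> \<rho>'")
    case True
    then show ?thesis unfolding boundary_ins_sign by (intro sum.neutral) (simp add: link_part_def)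
  next
    case False
    have "cone x (boundary ?D ?w) (insert x \<rho>') = 0"
      using split[of "insert x \<rho>'"] del_apex[of "insert x \<rho>'"] homotopy[of "insert x \<rho>'"] False
      by (simp add: link_part_def)
    then show ?thesis using False by (simp add: cone_def ins_sign_nonzero)
  qed
  have "cone x (boundary ?D ?w) \<rho> = 0" using link by (simp add: cone_def)
  then show "boundary ?D (deletion_part x z) \<rho> = - ?w \<rho>"
    using split[of \<rho>] homotopy[of \<rho>] by (simp add: eq_neg_iff_add_eq_0)
qed

lemma ind_acyclic_isolated_vertex:
  fixes K :: "'k::field itself"
  assumes S: "finite S" and xS: "x \<in> S" and isolated: "\<forall>v\<in>S. \<not> E x v \<and> \<not> E v x"
  shows "ind_acyclic K E S j"
proof (rule ind_acyclicI)
  let ?D = "ind_complex E S"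
  fix z :: "'a set \<Rightarrow> 'k"
  assume z: "is_chain ?D j z" and cycle: "\<And>\<sigma>. boundary ?D z \<sigma> = 0"
  let ?z0 = "deletion_part x z"
  have "\<not> E x x" using isolated xS by blast
  have supp: "card \<sigma> = j \<and> x \<notin> \<sigma> \<and> insert x \<sigma> \<in> ?D" if "?z0 \<sigma> \<noteq> 0" for \<sigma>
    using deletion_part_support[OF z that] insert_ind_complex[of \<sigma> E S x] xS \<open>\<not> E x x\<close> isolated
      ind_complex_subset by blast
  show "\<exists>c. is_chain ?D (Suc j) c \<and> (\<forall>\<sigma>. boundary ?D c \<sigma> = z \<sigma>)"
  proof (intro exI conjI allI)
    show "is_chain ?D (Suc j) (cone x ?z0)" by (rule is_chain_cone[OF S supp])
    fix \<sigma>
    have "boundary ?D (cone x ?z0) \<sigma> + cone x (boundary ?D ?z0) \<sigma> = ?z0 \<sigma>"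
      by (rule boundary_cone[OF S]) (use supp in blast)
    moreover have "cone x (boundary ?D ?z0) \<sigma> = - cone x (link_part x z) \<sigma>"
      by (simp add: cone_def boundary_link_deletion_part(2)[OF S z cycle])
    ultimately show "boundary ?D (cone x ?z0) \<sigma> = z \<sigma>"
      using deletion_part_plus_cone_link_part[of x z \<sigma>] by (simp add: algebra_simps)
  qed
qed

lemma ind_acyclic_edgeless:
  fixes K :: "'k::field itself"
  assumes "finite S" "\<forall>u\<in>S. \<forall>v\<in>S. \<not> E u v" "j \<ge> 1"
  shows "ind_acyclic K E S j"
proof (cases "S = {}")
  case True
  show ?thesis
  proof (rule ind_acyclicI)
    fix z :: "'a set \<Rightarrow> 'k"
    assume "is_chain (ind_complex E S) j z"
    then have "z \<sigma> = 0" for \<sigma>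
      using True \<open>j \<ge> 1\<close> by (auto simp: is_chain_def ind_complex_def)
    then show "\<exists>c. is_chain (ind_complex E S) (Suc j) c \<and> (\<forall>\<sigma>. boundary (ind_complex E S) c \<sigma> = z \<sigma>)"
      by (intro exI[of _ "\<lambda>_. 0"]) (simp add: is_chain_def boundary_zero)
  qed
next
  case False
  then obtain x where "x \<in> S" by blast
  then show ?thesis using ind_acyclic_isolated_vertex[OF assms(1) \<open>x \<in> S\<close>] assms(2) by blast
qed

definition link_set :: "('a \<Rightarrow> 'a \<Rightarrow> bool) \<Rightarrow> 'a set \<Rightarrow> 'a \<Rightarrow> 'a set" where
  "link_set E S x = {v \<in> S. v \<noteq> x \<and> \<not> E x v}"

lemma link_set_subset: "link_set E S x \<subseteq> S - {x}"
  by (auto simp: link_set_def)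

lemma is_chain_link_part:
  assumes "finite S" "is_chain (ind_complex E S) (Suc i) z"
  shows "is_chain (ind_complex E (link_set E S x)) i (link_part x z)"
  unfolding is_chain_def
proof (intro allI impI)
  fix \<rho> assume "link_part x z \<rho> \<noteq> 0"
  from link_part_support[OF assms this] show "\<rho> \<in> ind_complex E (link_set E S x) \<and> card \<rho> = i"
    by (auto simp: ind_complex_def link_set_def)
qed

lemma insert_link_face:
  assumes "\<sigma> \<in> ind_complex E (link_set E S x)" "x \<in> S" "\<not> E x x" "\<And>a b. E a b \<Longrightarrow> E b a"
  shows "x \<notin> \<sigma> \<and> insert x \<sigma> \<in> ind_complex E S"
  using assms ind_complex_subset[OF assms(1)] unfolding link_set_def ind_complex_def by blast

text \<open>Lifting a filling of the link part of \<open>z\<close> to the cone corrects the deletion part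
  of \<open>z\<close> into a cycle of the deletion \<open>S - {x}\<close>.\<close>

lemma deletion_cycle:
  fixes z c :: "'a::linorder set \<Rightarrow> 'k::field"
  assumes S: "finite S" and z: "is_chain (ind_complex E S) j z"
    and cycle: "\<And>\<sigma>. boundary (ind_complex E S) z \<sigma> = 0"
    and c: "is_chain (ind_complex E (link_set E S x)) j c"
    and fill: "\<And>\<sigma>. boundary (ind_complex E (link_set E S x)) c \<sigma> = link_part x z \<sigma>"
  shows "is_chain (ind_complex E (S - {x})) j (\<lambda>\<sigma>. deletion_part x z \<sigma> + c \<sigma>)"
    and "boundary (ind_complex E (S - {x})) (\<lambda>\<sigma>. deletion_part x z \<sigma> + c \<sigma>) \<sigma> = 0"
proof -
  let ?z' = "\<lambda>\<sigma>. deletion_part x z \<sigma> + c \<sigma>"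
  show z': "is_chain (ind_complex E (S - {x})) j ?z'"
    unfolding is_chain_def
  proof (intro allI impI)
    fix \<sigma> assume "?z' \<sigma> \<noteq> 0"
    then consider "deletion_part x z \<sigma> \<noteq> 0" | "c \<sigma> \<noteq> 0" by fastforce
    then show "\<sigma> \<in> ind_complex E (S - {x}) \<and> card \<sigma> = j"
    proof cases
      case 1
      from deletion_part_support[OF z this] show ?thesis by (auto simp: ind_complex_def)
    next
      case 2
      then show ?thesis using c ind_complex_mono[OF link_set_subset[of E S x], of E] by (auto simp: is_chain_def)
    qed
  qed
  have N: "link_set E S x \<subseteq> S" by (auto simp: link_set_def)
  have "boundary (ind_complex E S) ?z' \<sigma> = - link_part x z \<sigma> + boundary (ind_complex E (link_set E S x)) c \<sigma>"
    unfolding boundary_add boundary_link_deletion_part(2)[OF S z cycle] boundary_ind_complex_restrict[OF S N c] ..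
  then have "boundary (ind_complex E S) ?z' \<sigma> = 0" by (simp add: fill)
  then show "boundary (ind_complex E (S - {x})) ?z' \<sigma> = 0"
    by (simp add: boundary_ind_complex_restrict[OF S Diff_subset z'])
qed

lemma ind_acyclic_deletion_link:
  fixes K :: "'k::field itself"
  assumes S: "finite S" and xS: "x \<in> S" and sym: "\<And>a b. E a b \<Longrightarrow> E b a" and nx: "\<not> E x x"
    and deletion: "ind_acyclic K E (S - {x}) (Suc i)"
    and link: "ind_acyclic K E (link_set E S x) i"
  shows "ind_acyclic K E S (Suc i)"
proof (rule ind_acyclicI)
  let ?D = "ind_complex E S" and ?N = "link_set E S x"
  fix z :: "'a set \<Rightarrow> 'k"
  assume z: "is_chain ?D (Suc i) z" and cycle: "\<And>\<sigma>. boundary ?D z \<sigma> = 0"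
  let ?w = "link_part x z"
  have N: "?N \<subseteq> S" by (auto simp: link_set_def)
  have w: "is_chain (ind_complex E ?N) i ?w" by (rule is_chain_link_part[OF S z])
  have "boundary (ind_complex E ?N) ?w \<sigma> = 0" for \<sigma>
    using boundary_link_deletion_part(1)[OF S z cycle] boundary_ind_complex_restrict[OF S N w] by metis
  then obtain c1 where c1: "is_chain (ind_complex E ?N) (Suc i) c1"
    and fill1: "\<And>\<sigma>. boundary (ind_complex E ?N) c1 \<sigma> = ?w \<sigma>"
    using ind_acyclicD[OF link w] by blast
  let ?z' = "\<lambda>\<sigma>. deletion_part x z \<sigma> + c1 \<sigma>"
  obtain c2 where c2: "is_chain (ind_complex E (S - {x})) (Suc (Suc i)) c2"
    and fill2: "\<And>\<sigma>. boundary (ind_complex E (S - {x})) c2 \<sigma> = ?z' \<sigma>"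
    using ind_acyclicD[OF deletion deletion_cycle[OF S z cycle c1 fill1]] by blast
  have c1_supp: "card \<sigma> = Suc i \<and> x \<notin> \<sigma> \<and> insert x \<sigma> \<in> ?D" if "c1 \<sigma> \<noteq> 0" for \<sigma>
    using c1 that insert_link_face[where E = E, OF _ xS nx sym] by (auto simp: is_chain_def)
  show "\<exists>c. is_chain ?D (Suc (Suc i)) c \<and> (\<forall>\<sigma>. boundary ?D c \<sigma> = z \<sigma>)"
  proof (intro exI conjI allI)
    show "is_chain ?D (Suc (Suc i)) (\<lambda>\<sigma>. c2 \<sigma> - cone x c1 \<sigma>)"
      using is_chain_ind_complex_mono[OF c2 Diff_subset] is_chain_cone[OF S c1_supp]
      unfolding is_chain_def by (metis diff_zero diff_self)
    fix \<sigma>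
    have "boundary ?D (cone x c1) \<sigma> + cone x (boundary ?D c1) \<sigma> = c1 \<sigma>"
      by (rule boundary_cone[OF S]) (use c1_supp in blast)
    moreover have "cone x (boundary ?D c1) \<sigma> = cone x ?w \<sigma>"
      using boundary_ind_complex_restrict[OF S N c1] fill1 by (simp add: cone_def)
    ultimately have "boundary ?D (cone x c1) \<sigma> = c1 \<sigma> - cone x ?w \<sigma>"
      by (simp add: eq_diff_eq)
    moreover have "boundary ?D c2 \<sigma> = ?z' \<sigma>"
      using boundary_ind_complex_restrict[OF S Diff_subset c2] fill2 by simp
    ultimately have "boundary ?D (\<lambda>\<sigma>. c2 \<sigma> - cone x c1 \<sigma>) \<sigma> = ?z' \<sigma> - (c1 \<sigma> - cone x ?w \<sigma>)"
      by (simp add: boundary_diff)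
    also have "\<dots> = z \<sigma>"
      using deletion_part_plus_cone_link_part[of x z \<sigma>] by (simp add: algebra_simps)
    finally show "boundary ?D (\<lambda>\<sigma>. c2 \<sigma> - cone x c1 \<sigma>) \<sigma> = z \<sigma>" .
  qed
qed

section \<open>\<open>2K\<^sub>2\<close>-free graphs\<close>

lemma simple_graphD:
  assumes "simple_graph V E"
  shows "finite V" and "E a b \<Longrightarrow> E b a" and "\<not> E a a" and "E a b \<Longrightarrow> a \<in> V \<and> b \<in> V"
  using assms unfolding simple_graph_def by blast+

lemma twoK2_free_edges_adjacent:
  assumes G: "simple_graph V E" and F: "twoK2_free V E" and "E a b" "E c d"
  shows "E a c \<or> E a d \<or> E b c \<or> E b d"
proof (rule ccontr)
  assume "\<not> ?thesis"
  moreover have "distinct [a, b, c, d]"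
    using calculation assms(3,4) simple_graphD(2,3)[OF G] by auto
  ultimately show False
    using F assms(3,4) simple_graphD(4)[OF G] unfolding twoK2_free_def by blast
qed

lemma card_le_max_privacy_degree:
  assumes G: "simple_graph V E" and "E x y"
  shows "card (closed_nbhd V E x - closed_nbhd V E y) \<le> max_privacy_degree V E"
proof -
  let ?P = "{card (closed_nbhd V E x - closed_nbhd V E y) | x y. x \<in> V \<and> y \<in> V \<and> E x y}"
  have "?P \<subseteq> {..card V}"
  proof
    fix n assume "n \<in> ?P"
    then obtain a b where ab: "n = card (closed_nbhd V E a - closed_nbhd V E b)" "a \<in> V" by blast
    have "closed_nbhd V E a - closed_nbhd V E b \<subseteq> V" using ab(2) by (auto simp: closed_nbhd_def)
    then show "n \<in> {..card V}" using ab(1) card_mono[OF simple_graphD(1)[OF G]] by auto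
  qed
  then have "finite ({0} \<union> ?P)" by (simp add: finite_subset)
  moreover have "card (closed_nbhd V E x - closed_nbhd V E y) \<in> ?P"
    using assms simple_graphD(4)[OF G] by blast
  ultimately show ?thesis unfolding max_privacy_degree_def by (simp add: Max_ge)
qed

lemma twoK2_free_nested_nbhds:
  assumes G: "simple_graph V E" and F: "twoK2_free V E"
    and "A \<subseteq> S" and A: "\<forall>u\<in>A. \<forall>v\<in>A. \<not> E u v" and cover: "\<forall>u\<in>S - A. \<forall>v\<in>S - A. \<not> E u v"
    and "a \<in> A" "b \<in> A"
  shows "{u \<in> S. E a u} \<subseteq> {u \<in> S. E b u} \<or> {u \<in> S. E b u} \<subseteq> {u \<in> S. E a u}"
proof (rule ccontr)
  assume "\<not> ?thesis"
  then obtain u v where u: "u \<in> S" "E a u" "\<not> E b u" and v: "v \<in> S" "E b v" "\<not> E a v" by blast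
  have "u \<notin> A" "v \<notin> A" using u v A \<open>a \<in> A\<close> \<open>b \<in> A\<close> by blast+
  then have "\<not> E a b" "\<not> E u b" "\<not> E u v"
    using A cover u v \<open>a \<in> A\<close> \<open>b \<in> A\<close> simple_graphD(2)[OF G] by blast+
  then show False using twoK2_free_edges_adjacent[OF G F u(2) v(2)] u v by blast
qed

lemma twoK2_free_edgeless_link:
  assumes G: "simple_graph V E" and F: "twoK2_free V E" and "finite S"
    and "A \<subseteq> S" "A \<noteq> {}" and A: "\<forall>u\<in>A. \<forall>v\<in>A. \<not> E u v" and cover: "\<forall>u\<in>S - A. \<forall>v\<in>S - A. \<not> E u v"
  obtains a where "a \<in> A" "\<forall>u\<in>link_set E S a. \<forall>v\<in>link_set E S a. \<not> E u v"
proof -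
  let ?nbhd = "\<lambda>b. {u \<in> S. E b u}"
  have "finite A" using \<open>A \<subseteq> S\<close> \<open>finite S\<close> finite_subset by blast
  then obtain a where a: "a \<in> A" "card (?nbhd a) = Max ((\<lambda>b. card (?nbhd b)) ` A)"
    using Max_in[of "(\<lambda>b. card (?nbhd b)) ` A"] \<open>A \<noteq> {}\<close> by fastforce
  have maximal: "card (?nbhd b) \<le> card (?nbhd a)" if "b \<in> A" for b
    using a(2) \<open>finite A\<close> that by simp
  have largest: "?nbhd b \<subseteq> ?nbhd a" if "b \<in> A" for b
  proof (cases "?nbhd a \<subseteq> ?nbhd b")
    case True
    moreover have "finite (?nbhd b)" using \<open>finite S\<close> by simp
    ultimately show ?thesis using card_seteq maximal[OF that] by blast
  qed (use twoK2_free_nested_nbhds[OF G F \<open>A \<subseteq> S\<close> A cover a(1) that] in blast)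
  have "\<not> E u v" if "u \<in> link_set E S a" "v \<in> link_set E S a" for u v
  proof
    assume "E u v"
    then have "E v u" using simple_graphD(2)[OF G] by blast
    have "u \<in> A \<or> v \<in> A" using cover that \<open>E u v\<close> by (auto simp: link_set_def)
    then have "E a u \<or> E a v"
      using largest \<open>E u v\<close> \<open>E v u\<close> that by (auto simp: link_set_def)
    then show False using that by (auto simp: link_set_def)
  qed
  then show ?thesis using that a(1) by blast
qed

lemma card_inter_link_set:
  assumes "finite A" "a \<in> A" "a' \<in> A" "E a a'" "\<not> E a a"
  shows "card (A \<inter> link_set E S a) + 2 \<le> card A"
proof -
  have "A \<inter> link_set E S a \<subseteq> A - {a, a'}" using assms(4) by (auto simp: link_set_def)
  then have "card (A \<inter> link_set E S a) \<le> card (A - {a, a'})"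
    using assms(1) by (intro card_mono) auto
  moreover have "card (A - {a, a'}) + 2 = card A"
    using assms card_Diff_subset[of "{a, a'}" A] card_mono[of A "{a, a'}"] by (cases "a = a'") auto
  ultimately show ?thesis by simp
qed

lemma ind_acyclic_small_vertex_cover:
  fixes K :: "'k::field itself"
  assumes G: "simple_graph V E" and F: "twoK2_free V E"
  shows "S \<subseteq> V \<Longrightarrow> A \<subseteq> S \<Longrightarrow> \<forall>u\<in>S - A. \<forall>v\<in>S - A. \<not> E u v \<Longrightarrow> card A + 3 \<le> 2 * j
    \<Longrightarrow> ind_acyclic K E S j"
proof (induction "card S" arbitrary: S A j rule: less_induct)
  case less
  note sym = simple_graphD(2)[OF G] and irr = simple_graphD(3)[OF G]
  have S: "finite S" using less.prems(1) simple_graphD(1)[OF G] finite_subset by blast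
  have "finite A" using less.prems(2) S finite_subset by blast
  show ?case
  proof (cases "\<forall>u\<in>S. \<forall>v\<in>S. \<not> E u v")
    case True
    show ?thesis by (rule ind_acyclic_edgeless[OF S True]) (use less.prems(4) in linarith)
  next
    case False
    then have "A \<noteq> {}" using less.prems(3) by blast
    then obtain a0 where "a0 \<in> A" by blast
    obtain i where j: "j = Suc i" using less.prems(4) by (cases j) auto
    have deletion: "ind_acyclic K E (S - {a}) j" if "a \<in> A" for a
    proof (rule less.hyps)
      show "card (S - {a}) < card S" using that less.prems(2) S by (meson card_Diff1_less subsetD)
      show "card (A - {a}) + 3 \<le> 2 * j" using less.prems(4) \<open>finite A\<close> that by simp
    qed (use less.prems in auto)
    show ?thesis
    proof (cases "\<exists>a\<in>A. \<exists>a'\<in>A. E a a'")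
      case True
      then obtain a a' where aa: "a \<in> A" "a' \<in> A" "E a a'" by blast
      let ?N = "link_set E S a"
      have "ind_acyclic K E ?N i"
      proof (rule less.hyps)
        show "card ?N < card S"
          using aa less.prems(2) S by (intro psubset_card_mono) (auto simp: link_set_def)
        show "card (A \<inter> ?N) + 3 \<le> 2 * i"
          using card_inter_link_set[of A a a' E S] \<open>finite A\<close> aa irr less.prems(4) j by simp
      qed (use less.prems in \<open>auto simp: link_set_def\<close>)
      then show ?thesis
        unfolding j using ind_acyclic_deletion_link[where E = E, OF S _ sym irr] deletion aa(1) less.prems(2) j by blast
    next
      case False
      obtain a where "a \<in> A" and edgeless: "\<forall>u\<in>link_set E S a. \<forall>v\<in>link_set E S a. \<not> E u v"
        using twoK2_free_edgeless_link[OF G F S less.prems(2) \<open>A \<noteq> {}\<close> _ less.prems(3)] False by blast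
      have "ind_acyclic K E (link_set E S a) i"
        by (rule ind_acyclic_edgeless[OF _ edgeless]) (use S less.prems(4) j in \<open>auto simp: link_set_def\<close>)
      then show ?thesis
        unfolding j using ind_acyclic_deletion_link[where E = E, OF S _ sym irr] deletion \<open>a \<in> A\<close> less.prems(2) j by blast
    qed
  qed
qed

lemma ind_acyclic_high_degree:
  fixes K :: "'k::field itself"
  assumes G: "simple_graph V E" and F: "twoK2_free V E"
    and j: "max_privacy_degree V E + 5 \<le> 2 * j"
  shows "S \<subseteq> V \<Longrightarrow> ind_acyclic K E S j"
proof (induction "card S" arbitrary: S rule: less_induct)
  case less
  note sym = simple_graphD(2)[OF G] and irr = simple_graphD(3)[OF G]
  have S: "finite S" using less.prems simple_graphD(1)[OF G] finite_subset by blast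
  show ?case
  proof (cases "\<forall>u\<in>S. \<forall>v\<in>S. \<not> E u v")
    case True
    show ?thesis by (rule ind_acyclic_edgeless[OF S True]) (use j in linarith)
  next
    case False
    then obtain x y where xy: "x \<in> S" "y \<in> S" "E x y" by blast
    obtain i where ji: "j = Suc i" using j by (cases j) auto
    have deletion: "ind_acyclic K E (S - {x}) j"
      using less.hyps[of "S - {x}"] less.prems xy(1) S by (meson card_Diff1_less Diff_subset order_trans)
    let ?N = "link_set E S x"
    let ?A = "{v \<in> ?N. E y v}"
    have cover: "\<forall>u\<in>?N - ?A. \<forall>v\<in>?N - ?A. \<not> E u v"
      using twoK2_free_edges_adjacent[OF G F xy(3)] by (auto simp: link_set_def)
    have "?A \<subseteq> closed_nbhd V E y - closed_nbhd V E x"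
      using less.prems xy sym unfolding link_set_def closed_nbhd_def by auto
    then have "card ?A \<le> card (closed_nbhd V E y - closed_nbhd V E x)"
      using simple_graphD(1)[OF G] by (intro card_mono) (auto simp: closed_nbhd_def)
    also have "\<dots> \<le> max_privacy_degree V E"
      using card_le_max_privacy_degree[OF G] sym xy(3) by blast
    finally have "card ?A + 3 \<le> 2 * i" using j ji by simp
    then have "ind_acyclic K E ?N i"
      by (intro ind_acyclic_small_vertex_cover[OF G F _ _ cover]) (use less.prems in \<open>auto simp: link_set_def\<close>)
    then show ?thesis
      unfolding ji using ind_acyclic_deletion_link[where E = E, OF S xy(1) sym irr] deletion ji by blast
  qed
qed

lemma not_red_hom_nonzero_if_ind_acyclic:
  fixes K :: "'k::field itself"
  assumes S: "finite S" and acyclic: "ind_acyclic K E S j"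
  shows "\<not> red_hom_nonzero K (ind_complex E S) j"
proof
  let ?D = "ind_complex E S"
  assume "red_hom_nonzero K ?D j"
  then obtain z :: "'a set \<Rightarrow> 'k" where z: "is_chain ?D j z"
    and cycle: "\<forall>\<sigma>. card \<sigma> + 1 = j \<longrightarrow> boundary ?D z \<sigma> = 0"
    and not_boundary: "\<not> (\<exists>c. is_chain ?D (j + 1) c \<and> (\<forall>\<sigma>. card \<sigma> = j \<longrightarrow> z \<sigma> = boundary ?D c \<sigma>))"
    unfolding red_hom_nonzero_def by blast
  have "boundary ?D z \<sigma> = 0" for \<sigma>
  proof (cases j)
    case 0
    then show ?thesis using boundary_chain_0[OF S] z by blast
  next
    case (Suc i)
    then have "is_chain ?D i (boundary ?D z)" using is_chain_boundary[OF S] z by blast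
    then show ?thesis using cycle Suc unfolding is_chain_def by fastforce
  qed
  then obtain c where "is_chain ?D (Suc j) c" "\<And>\<sigma>. boundary ?D c \<sigma> = z \<sigma>"
    using ind_acyclicD[OF acyclic z] by blast
  then show False using not_boundary by auto
qed

theorem mainTheorem19:
  fixes V :: "'a::linorder set" and E :: "'a \<Rightarrow> 'a \<Rightarrow> bool"
  assumes "simple_graph V E"
    and "twoK2_free V E"
  shows "real (reg TYPE('k::field) V E) \<le> real (max_privacy_degree V E) / 2 + 2"
proof -
  let ?M = "{j. \<exists>S \<subseteq> V. red_hom_nonzero TYPE('k) (ind_complex E S) j}"
  have bound: "2 * j \<le> max_privacy_degree V E + 4" if "j \<in> ?M" for j
  proof (rule ccontr)
    obtain S where S: "S \<subseteq> V" "red_hom_nonzero TYPE('k) (ind_complex E S) j" using \<open>j \<in> ?M\<close> by blast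
    assume "\<not> ?thesis"
    then have "ind_acyclic TYPE('k) E S j" by (intro ind_acyclic_high_degree[OF assms _ S(1)]) linarith
    then show False
      using not_red_hom_nonzero_if_ind_acyclic S simple_graphD(1)[OF assms(1)] finite_subset by blast
  qed
  have "reg TYPE('k) V E \<le> (max_privacy_degree V E + 4) div 2"
  proof (cases "?M = {}")
    case True
    then show ?thesis unfolding reg_def True by simp
  next
    case False
    show ?thesis unfolding reg_def
    proof (rule cSup_least[OF False])
      fix j assume "j \<in> ?M"
      from bound[OF this] show "j \<le> (max_privacy_degree V E + 4) div 2" by simp
    qed
  qed
  then show ?thesis by linarith
qed

end
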